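(* Let $s_j=\sigma_j+it_j\in\mathbb{C}$ ($j=1,2,3$) with $\sigma_1+\sigma_3>1$ and $\sigma_1+\sigma_2+\sigma_3>2$, where $s_1,s_2$ and $\sigma_3$ are fixed and $t_3$ varies. Then $$\int_2^T \left|\zeta_{AV,2}(s_1,s_2,s_3)\right|^2\,dt_3=\zeta_{AV,2}^{[2]}(s_1,s_2,2\sigma_3)\,T+O(1)\qquad (T\to\infty),$$ where the implied constant depends on $s_1,s_2$ and $\sigma_3$.
   Context: Write $s_j=\sigma_j+it_j$ with $\sigma_j,t_j\in\mathbb{R}$; complex powers $n^{s}=e^{s\log n}$ use the real logarithm of positive reals. The Apostol–Vu double zeta-function is $$\zeta_{AV,2}(s_1,s_2,s_3)=\sum_{m=1}^\infty\sum_{n<m}\frac{1}{m^{s_1}n^{s_2}(m+n)^{s_3}},$$ where $n$ runs over positive integers $n<m$; this series converges absolutely for $\sigma_1+\sigma_3>1$, $\sigma_1+\sigma_2+\sigma_3>2$, and $\zeta_{AV,2}$ extends meromorphically to $\mathbb{C}^3$ with singularities only on the hyperplanes $s_1+s_3=1-l$ and $s_1+s_2+s_3=2-l$ ($l\in\mathbb{Z}_{\ge0}$); $\zeta_{AV,2}$ denotes this continuation. Also define $$\zeta_{AV,2}^{[2]}(s_1,s_2,s_3)=\sum_{k=2}^\infty\left|\sum_{k/2<m\le k-1}\frac{1}{m^{s_1}(k-m)^{s_2}}\right|^2\frac{1}{k^{s_3}},$$ which converges absolutely when $2\sigma_1+\sigma_3>1$ and $2\sigma_1+2\sigma_2+\sigma_3>3$.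 *)

theory Defs
  imports "HOL-Analysis.Analysis" "HOL-Library.Landau_Symbols"
begin

text \<open>On the region of
  absolute convergence this coincides with the meromorphic continuation.\<close>
definition zeta_AV2 :: "complex \<Rightarrow> complex \<Rightarrow> complex \<Rightarrow> complex" where
  "zeta_AV2 s1 s2 s3 =
     infsum (\<lambda>(m::nat, n::nat). 1 / (of_nat m powr s1 * of_nat n powr s2 * of_nat (m + n) powr s3))
            {(m, n). 0 < n \<and> n < m}"

definition zeta_AV2_sq :: "complex \<Rightarrow> complex \<Rightarrow> complex \<Rightarrow> complex" where
  "zeta_AV2_sq s1 s2 s3 =
     infsum (\<lambda>k::nat.
        complex_of_real ((cmod (\<Sum>m\<in>{m::nat. real k / 2 < real m \<and> m \<le> k - 1}.
              1 / (of_nat m powr s1 * of_nat (k - m) powr s2)))^2) / of_nat k powr s3)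
       {2..}"

end

theory Submission
  imports Defs
begin

text \<open>Grouping the double series by k = m + n writes zeta_AV2 s1 s2 (\<sigma>3 + i t) as the
  generalized Dirichlet series \<Sum>k. c k * exp (- i t ln k) with c k = A k * k powr (- \<sigma>3), where
  A k = \<Sum>{k/2 < m < k}. m powr (- s1) * (k - m) powr (- s2); the convergence conditions give
  |c k| \<le> C * k powr (-1 - \<delta>) for some \<delta> > 0.  Expanding the square and integrating over [2, T],
  the diagonal terms contribute (T - 2) * \<Sum>k. |c k|^2 = (T - 2) * zeta_AV2_sq s1 s2 (2 \<sigma>3), and each
  off-diagonal term is at most 2 |c k| |c l| / |ln k - ln l| uniformly in T.  Since
  1 / ln (l / k) \<le> l / (l - k), the off-diagonal sum is dominated by
  \<Sum>{k < l}. k powr (-1 - \<delta>) * (l - k) powr (-1 - \<delta>), which is finite.\<close>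

lemma powr_neg_le_two_powr_abs:
  fixes x y r :: real
  assumes "0 < x" "x \<le> y" "y \<le> 2 * x"
  shows "x powr (- r) \<le> 2 powr \<bar>r\<bar> * y powr (- r)"
proof (cases "r \<ge> 0")
  case True
  have "x powr (- r) \<le> (y / 2) powr (- r)"
    using True assms by (intro powr_mono2') auto
  also have "\<dots> = 2 powr r * y powr (- r)"
    by (simp add: powr_divide powr_minus divide_simps)
  finally show ?thesis using True by simp
next
  case False
  have "x powr (- r) \<le> y powr (- r)"
    using False assms by (intro powr_mono2) auto
  also have "\<dots> \<le> 2 powr \<bar>r\<bar> * y powr (- r)"
    using powr_mono[of 0 "\<bar>r\<bar>" 2] by (simp add: mult_le_cancel_right1)
  finally show ?thesis .
qed

lemma powr_mult_div_ln_diff_le: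
  fixes x y \<delta> :: real
  assumes "0 < x" "x < y" "0 \<le> \<delta>"
  shows "x powr (-1-\<delta>) * y powr (-1-\<delta>) / (ln y - ln x) \<le> x powr (-1-\<delta>) * (y - x) powr (-1-\<delta>)"
proof -
  have "ln (x / y) \<le> x / y - 1"
    using assms by (intro ln_le_minus_one) auto
  then have gap: "(y - x) / y \<le> ln y - ln x"
    using assms by (simp add: ln_div field_simps)
  have gap_pos: "0 < (y - x) / y" using assms by simp
  have "x powr (-1-\<delta>) * y powr (-1-\<delta>) / (ln y - ln x) \<le> x powr (-1-\<delta>) * y powr (-1-\<delta>) / ((y - x) / y)"
    using gap gap_pos by (intro divide_left_mono mult_pos_pos) auto
  also have "\<dots> = x powr (-1-\<delta>) * y powr (- \<delta>) / (y - x)"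
    using assms by (simp add: powr_diff powr_minus field_simps)
  also have "\<dots> \<le> x powr (-1-\<delta>) * (y - x) powr (- \<delta>) / (y - x)"
    using assms by (intro divide_right_mono mult_left_mono powr_mono2') auto
  also have "\<dots> = x powr (-1-\<delta>) * (y - x) powr (-1-\<delta>)"
    using assms by (simp add: powr_diff powr_minus field_simps)
  finally show ?thesis .
qed

lemma has_integral_exp_i_mult:
  fixes u a b :: real
  assumes "u \<noteq> 0" "a \<le> b"
  shows "((\<lambda>t. exp (\<i> * of_real (u * t))) has_integral
           (exp (\<i> * of_real (u * b)) - exp (\<i> * of_real (u * a))) / (\<i> * of_real u)) {a..b}"
proof -
  define F where "F z = exp (\<i> * of_real u * z) / (\<i> * of_real u)" for z
  have "((\<lambda>t. F (of_real t)) has_vector_derivative exp (\<i> * of_real (u * t))) (at t within {a..b})" for t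
  proof -
    have "(F has_field_derivative exp (\<i> * of_real (u * t))) (at (of_real t))"
      unfolding F_def using assms by (auto intro!: derivative_eq_intros simp: mult.assoc)
    then show ?thesis
      by (rule has_vector_derivative_at_within[OF has_vector_derivative_real_field])
  qed
  from fundamental_theorem_of_calculus[OF assms(2) this]
  show ?thesis by (simp add: F_def diff_divide_distrib mult.assoc)
qed

lemma norm_integral_exp_i_mult_le:
  fixes u a b :: real
  assumes "u \<noteq> 0" "a \<le> b"
  shows "norm (integral {a..b} (\<lambda>t. exp (\<i> * of_real (u * t)))) \<le> 2 / \<bar>u\<bar>"
proof -
  have "norm (exp (\<i> * of_real (u * b)) - exp (\<i> * of_real (u * a))) \<le> 2"
    using norm_triangle_ineq4[of "exp (\<i> * of_real (u * b))" "exp (\<i> * of_real (u * a))"]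
    by (simp add: norm_exp_eq_Re)
  then show ?thesis
    using integral_unique[OF has_integral_exp_i_mult[OF assms]] assms
    by (simp add: norm_divide norm_mult divide_right_mono)
qed

lemma norm_sum_exp_i_mult_squared:
  fixes c :: "'a \<Rightarrow> complex" and freq :: "'a \<Rightarrow> real"
  shows "complex_of_real ((cmod (\<Sum>k\<in>K. c k * exp (\<i> * of_real (freq k * t))))^2) =
           (\<Sum>k\<in>K. \<Sum>l\<in>K. c k * cnj (c l) * exp (\<i> * of_real ((freq k - freq l) * t)))"
proof -
  have "complex_of_real ((cmod (\<Sum>k\<in>K. c k * exp (\<i> * of_real (freq k * t))))^2) =
          (\<Sum>k\<in>K. \<Sum>l\<in>K. (c k * exp (\<i> * of_real (freq k * t))) * cnj (c l * exp (\<i> * of_real (freq l * t))))"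
    unfolding complex_norm_square by (simp add: sum_product)
  also have "\<dots> = (\<Sum>k\<in>K. \<Sum>l\<in>K. c k * cnj (c l) * exp (\<i> * of_real ((freq k - freq l) * t)))"
    by (intro sum.cong refl) (simp add: exp_cnj mult_ac flip: exp_add, simp add: algebra_simps)
  finally show ?thesis .
qed

lemma mean_square_exp_sum:
  fixes c :: "'a \<Rightarrow> complex" and freq :: "'a \<Rightarrow> real"
  assumes "finite K" "inj_on freq K" "a \<le> b"
  shows "\<bar>integral {a..b} (\<lambda>t. (cmod (\<Sum>k\<in>K. c k * exp (\<i> * of_real (freq k * t))))^2)
            - (b - a) * (\<Sum>k\<in>K. (cmod (c k))^2)\<bar>
         \<le> (\<Sum>k\<in>K. \<Sum>l\<in>K - {k}. 2 * cmod (c k) * cmod (c l) / \<bar>freq k - freq l\<bar>)"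
proof -
  define J where "J k l = integral {a..b} (\<lambda>t. exp (\<i> * of_real ((freq k - freq l) * t)))" for k l
  define X where "X k l = c k * cnj (c l) * J k l" for k l
  have "((\<lambda>t. exp (\<i> * of_real ((freq k - freq l) * t))) has_integral J k l) {a..b}" for k l
    unfolding J_def by (intro integrable_integral integrable_continuous_interval continuous_intros)
  then have "((\<lambda>t. complex_of_real ((cmod (\<Sum>k\<in>K. c k * exp (\<i> * of_real (freq k * t))))^2))
               has_integral (\<Sum>k\<in>K. \<Sum>l\<in>K. X k l)) {a..b}"
    unfolding norm_sum_exp_i_mult_squared X_def
    by (intro has_integral_sum has_integral_mult_right assms)
  from has_integral_linear[OF this bounded_linear_Re]
  have integral_eq: "integral {a..b} (\<lambda>t. (cmod (\<Sum>k\<in>K. c k * exp (\<i> * of_real (freq k * t))))^2)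
      = Re (\<Sum>k\<in>K. X k k) + Re (\<Sum>k\<in>K. \<Sum>l\<in>K - {k}. X k l)"
    using assms(1) by (simp add: o_def integral_unique sum.remove flip: sum.distrib)
  have "X k k = of_real ((b - a) * (cmod (c k))^2)" for k
    using assms(3) by (simp add: X_def J_def scaleR_conv_of_real flip: complex_norm_square)
  then have diagonal: "Re (\<Sum>k\<in>K. X k k) = (b - a) * (\<Sum>k\<in>K. (cmod (c k))^2)"
    by (simp add: sum_distrib_left)
  have "cmod (X k l) \<le> 2 * cmod (c k) * cmod (c l) / \<bar>freq k - freq l\<bar>" if "k \<in> K" "l \<in> K - {k}" for k l
  proof -
    have "freq k - freq l \<noteq> 0" using that assms(2) by (auto dest: inj_onD)
    from norm_integral_exp_i_mult_le[OF this assms(3)]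
    have "cmod (c k) * cmod (c l) * cmod (J k l) \<le> cmod (c k) * cmod (c l) * (2 / \<bar>freq k - freq l\<bar>)"
      unfolding J_def by (intro mult_left_mono) auto
    then show ?thesis
      by (simp add: X_def norm_mult mult_ac)
  qed
  then have "cmod (\<Sum>k\<in>K. \<Sum>l\<in>K - {k}. X k l)
      \<le> (\<Sum>k\<in>K. \<Sum>l\<in>K - {k}. 2 * cmod (c k) * cmod (c l) / \<bar>freq k - freq l\<bar>)"
    by (intro order.trans[OF norm_sum] sum_mono order.trans[OF norm_sum]) auto
  with abs_Re_le_cmod[of "\<Sum>k\<in>K. \<Sum>l\<in>K - {k}. X k l"] show ?thesis
    unfolding integral_eq diagonal by linarith
qed

lemma log_offdiagonal_sum_le:
  fixes \<delta> :: real
  assumes "\<delta> > 0"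
  shows "(\<Sum>k\<in>{1..<N}. \<Sum>l\<in>{1..<N} - {k}.
            real k powr (-1-\<delta>) * real l powr (-1-\<delta>) / \<bar>ln (real k) - ln (real l)\<bar>)
         \<le> 2 * (\<Sum>j. real j powr (-1-\<delta>))^2"
proof -
  define w where "w j = real j powr (-1-\<delta>)" for j :: nat
  define Z where "Z = suminf w"
  \<comment> \<open>\<open>U k l\<close> vanishes unless \<open>k < l\<close>, since \<open>real 0 powr _ = 0\<close>.\<close>
  define U where "U k l = w k * w (l - k)" for k l
  have w_nonneg: "w j \<ge> 0" for j by (simp add: w_def)
  have w_summable: "summable w"
    unfolding w_def using assms by (subst summable_real_powr_iff) auto
  have U_nonneg: "U k l \<ge> 0" for k l by (simp add: U_def w_nonneg)
  have pair: "w k * w l / \<bar>ln (real k) - ln (real l)\<bar> \<le> U k l + U l k"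
    if "1 \<le> k" "1 \<le> l" "k \<noteq> l" for k l
  proof -
    have ordered: "w k * w l / \<bar>ln (real k) - ln (real l)\<bar> \<le> U k l"
      if "1 \<le> k" "k < l" for k l
      using powr_mult_div_ln_diff_le[of "real k" "real l" \<delta>] that assms
      by (simp add: w_def U_def of_nat_diff)
    show ?thesis
    proof (cases "k < l")
      case True
      with ordered[OF \<open>1 \<le> k\<close> True] U_nonneg[of l k] show ?thesis by linarith
    next
      case False
      with ordered[of l k] that U_nonneg[of k l] show ?thesis
        by (simp add: abs_minus_commute mult.commute)
    qed
  qed
  have row: "(\<Sum>l\<in>{1..<N}. U k l) \<le> w k * Z" for k
  proof -
    have "(\<Sum>l\<in>{1..<N}. w (l - k)) = (\<Sum>l\<in>{k<..<N}. w (l - k))"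
      by (rule sum.mono_neutral_right) (auto simp: w_def)
    also have "\<dots> = (\<Sum>j\<in>(\<lambda>l. l - k) ` {k<..<N}. w j)"
      by (subst sum.reindex) (auto simp: inj_on_def)
    also have "\<dots> \<le> Z"
      unfolding Z_def by (intro sum_le_suminf w_summable w_nonneg) auto
    finally show ?thesis
      by (simp add: U_def w_nonneg mult_left_mono flip: sum_distrib_left)
  qed
  have "(\<Sum>k\<in>{1..<N}. \<Sum>l\<in>{1..<N} - {k}. w k * w l / \<bar>ln (real k) - ln (real l)\<bar>)
      \<le> (\<Sum>k\<in>{1..<N}. \<Sum>l\<in>{1..<N}. U k l + U l k)"
    by (intro sum_mono order.trans[OF sum_mono sum_mono2] pair) (auto intro: add_nonneg_nonneg U_nonneg)
  also have "\<dots> = 2 * (\<Sum>k\<in>{1..<N}. \<Sum>l\<in>{1..<N}. U k l)"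
    by (simp add: sum.distrib sum.swap[of "\<lambda>k l. U l k"])
  also have "\<dots> \<le> 2 * (\<Sum>k\<in>{1..<N}. w k * Z)"
    by (intro mult_left_mono sum_mono row) auto
  also have "\<dots> = 2 * ((\<Sum>k\<in>{1..<N}. w k) * Z)"
    by (simp add: sum_distrib_right)
  also have "\<dots> \<le> 2 * (Z * Z)"
    unfolding Z_def
    by (intro mult_left_mono mult_right_mono sum_le_suminf w_summable w_nonneg suminf_nonneg) auto
  finally show ?thesis by (simp add: Z_def w_def[abs_def] power2_eq_square)
qed

lemma dirichlet_polynomial_mean_square_le:
  fixes c :: "nat \<Rightarrow> complex" and C \<delta> a b :: real
  assumes "\<delta> > 0" "a \<le> b" and c_le: "\<And>k. cmod (c k) \<le> C * real k powr (-1-\<delta>)"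
  shows "\<bar>integral {a..b} (\<lambda>t. (cmod (\<Sum>k<N. c k * exp (\<i> * of_real (- ln (real k) * t))))^2)
            - (b - a) * (\<Sum>k<N. (cmod (c k))^2)\<bar>
         \<le> 4 * C^2 * (\<Sum>j. real j powr (-1-\<delta>))^2"
proof -
  have "cmod (c 0) \<le> 0" using c_le[of 0] by simp
  then have c0: "c 0 = 0" by simp
  have C_nonneg: "C \<ge> 0" using order_trans[OF norm_ge_zero c_le[of 1]] by simp
  \<comment> \<open>The frequencies \<open>- ln k\<close> are distinct only for \<open>k \<ge> 1\<close>; the term \<open>k = 0\<close> vanishes.\<close>
  have from_1: "(\<Sum>k<N. g k) = (\<Sum>k\<in>{1..<N}. g k)" if "g 0 = 0" for g :: "nat \<Rightarrow> 'b::comm_monoid_add"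
    using that by (intro sum.mono_neutral_right) (auto simp: not_le)
  have inj: "inj_on (\<lambda>k. - ln (real k)) {1..<N}"
    by (auto simp: inj_on_def)
  have "(\<Sum>k\<in>{1..<N}. \<Sum>l\<in>{1..<N} - {k}. 2 * cmod (c k) * cmod (c l) / \<bar>- ln (real k) - - ln (real l)\<bar>)
      \<le> (\<Sum>k\<in>{1..<N}. \<Sum>l\<in>{1..<N} - {k}. 2 * C^2 *
            (real k powr (-1-\<delta>) * real l powr (-1-\<delta>) / \<bar>ln (real k) - ln (real l)\<bar>))"
  proof (intro sum_mono)
    fix k l
    have "cmod (c k) * cmod (c l) \<le> (C * real k powr (-1-\<delta>)) * (C * real l powr (-1-\<delta>))"
      using C_nonneg by (intro mult_mono c_le) auto
    then show "2 * cmod (c k) * cmod (c l) / \<bar>- ln (real k) - - ln (real l)\<bar>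
        \<le> 2 * C^2 * (real k powr (-1-\<delta>) * real l powr (-1-\<delta>) / \<bar>ln (real k) - ln (real l)\<bar>)"
      by (auto simp: power2_eq_square abs_minus_commute mult_ac intro!: divide_right_mono)
  qed
  also have "\<dots> = 2 * C^2 * (\<Sum>k\<in>{1..<N}. \<Sum>l\<in>{1..<N} - {k}.
            real k powr (-1-\<delta>) * real l powr (-1-\<delta>) / \<bar>ln (real k) - ln (real l)\<bar>)"
    by (simp only: sum_distrib_left)
  also have "\<dots> \<le> 2 * C^2 * (2 * (\<Sum>j. real j powr (-1-\<delta>))^2)"
    by (intro mult_left_mono log_offdiagonal_sum_le assms(1)) auto
  finally show ?thesis
    using mean_square_exp_sum[OF _ inj assms(2), of c] c0
    by (simp add: from_1)
qed

lemma summable_norm_power2_of_powr_bound: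
  fixes f :: "nat \<Rightarrow> 'a::real_normed_vector" and C \<delta> :: real
  assumes "0 < \<delta>" "\<And>k. norm (f k) \<le> C * real k powr (-1-\<delta>)"
  shows "summable (\<lambda>k. (norm (f k))^2)"
proof (rule summable_comparison_test')
  show "summable (\<lambda>k. C^2 * real k powr (-2-2*\<delta>))"
    using assms(1) by (intro summable_mult) (simp add: summable_real_powr_iff)
  fix k :: nat
  have "(real k powr (-1-\<delta>))^2 = real k powr ((-1-\<delta>) + (-1-\<delta>))"
    unfolding power2_eq_square by (rule powr_add[symmetric])
  then have square: "(C * real k powr (-1-\<delta>))^2 = C^2 * real k powr (-2-2*\<delta>)"
    by (simp add: power_mult_distrib)
  have "(norm (f k))^2 \<le> (C * real k powr (-1-\<delta>))^2"
    by (intro power_mono assms(2)) auto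
  then show "norm ((norm (f k))^2) \<le> C^2 * real k powr (-2-2*\<delta>)"
    by (simp only: square real_norm_def abs_power2 abs_norm_cancel)
qed

lemma dirichlet_series_mean_square_le:
  fixes c :: "nat \<Rightarrow> complex" and C \<delta> a b :: real
  assumes "\<delta> > 0" "a \<le> b" and c_le: "\<And>k. cmod (c k) \<le> C * real k powr (-1-\<delta>)"
  shows "\<bar>integral {a..b} (\<lambda>t. (cmod (\<Sum>k. c k * exp (\<i> * of_real (- ln (real k) * t))))^2)
            - (b - a) * (\<Sum>k. (cmod (c k))^2)\<bar>
         \<le> 4 * C^2 * (\<Sum>j. real j powr (-1-\<delta>))^2"
proof -
  define e where "e k t = c k * exp (\<i> * of_real (- ln (real k) * t))" for k t
  define M where "M k = C * real k powr (-1-\<delta>)" for k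
  have M_summable: "summable M"
    unfolding M_def using assms(1) by (intro summable_mult) (simp add: summable_real_powr_iff)
  have e_le: "norm (e k t) \<le> M k" for k t
    by (simp add: e_def M_def norm_mult c_le)
  have partial_sums: "uniform_limit UNIV (\<lambda>N t. \<Sum>k<N. e k t) (\<lambda>t. \<Sum>k. e k t) sequentially"
    by (rule Weierstrass_m_test[OF e_le M_summable])
  have "bounded (range (\<lambda>t. norm (\<Sum>k. e k t)))"
    using norm_suminf_le[OF e_le M_summable] by (intro boundedI[of _ "suminf M"]) auto
  then have "uniform_limit UNIV (\<lambda>N t. norm (\<Sum>k<N. e k t) * norm (\<Sum>k<N. e k t))
               (\<lambda>t. norm (\<Sum>k. e k t) * norm (\<Sum>k. e k t)) sequentially"
    by (intro uniform_lim_mult uniform_limit_norm partial_sums)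
  then have "uniform_limit {a..b} (\<lambda>N t. (cmod (\<Sum>k<N. e k t))^2) (\<lambda>t. (cmod (\<Sum>k. e k t))^2) sequentially"
    by (auto simp: power2_eq_square intro: uniform_limit_on_subset)
  moreover have "continuous_on {a..b} (\<lambda>t. (cmod (\<Sum>k<N. e k t))^2)" for N
    unfolding e_def by (intro continuous_intros)
  ultimately obtain I J where
    I: "\<And>N. ((\<lambda>t. (cmod (\<Sum>k<N. e k t))^2) has_integral I N) {a..b}" and
    J: "((\<lambda>t. (cmod (\<Sum>k. e k t))^2) has_integral J) {a..b}" and
    lim_I: "I \<longlonglongrightarrow> J"
    by (rule uniform_limit_integral) auto
  have lim_S: "(\<lambda>N. \<Sum>k<N. (cmod (c k))^2) \<longlonglongrightarrow> (\<Sum>k. (cmod (c k))^2)"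
    by (intro summable_LIMSEQ summable_norm_power2_of_powr_bound[OF assms(1) c_le])
  have "(\<lambda>N. \<bar>I N - (b - a) * (\<Sum>k<N. (cmod (c k))^2)\<bar>)
      \<longlonglongrightarrow> \<bar>J - (b - a) * (\<Sum>k. (cmod (c k))^2)\<bar>"
    by (intro tendsto_rabs tendsto_diff tendsto_mult_left lim_I lim_S)
  moreover have "\<bar>I N - (b - a) * (\<Sum>k<N. (cmod (c k))^2)\<bar> \<le> 4 * C^2 * (\<Sum>j. real j powr (-1-\<delta>))^2" for N
    using dirichlet_polynomial_mean_square_le[OF assms, of N] integral_unique[OF I]
    by (simp add: e_def)
  ultimately have "\<bar>J - (b - a) * (\<Sum>k. (cmod (c k))^2)\<bar> \<le> 4 * C^2 * (\<Sum>j. real j powr (-1-\<delta>))^2"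
    by (intro LIMSEQ_le_const2) auto
  then show ?thesis
    using integral_unique[OF J] by (simp add: e_def)
qed

text \<open>The coefficient of k powr (- s3) in zeta_AV2 s1 s2 s3; it is also the inner sum of zeta_AV2_sq
  (see AV_range_eq).\<close>

definition AV_coeff :: "complex \<Rightarrow> complex \<Rightarrow> nat \<Rightarrow> complex" where
  "AV_coeff s1 s2 k = (\<Sum>m | k < 2 * m \<and> m < k. 1 / (of_nat m powr s1 * of_nat (k - m) powr s2))"

definition AV_majorant :: "real \<Rightarrow> real \<Rightarrow> nat \<Rightarrow> real" where
  "AV_majorant a b k = (\<Sum>m | k < 2 * m \<and> m < k. real m powr (- a) * real (k - m) powr (- b))"

lemma finite_AV_range: "finite {m::nat. k < 2 * m \<and> m < k}"
  by (rule finite_subset[of _ "{..<k}"]) auto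

lemma AV_range_eq: "{m::nat. real k / 2 < real m \<and> m \<le> k - 1} = {m. k < 2 * m \<and> m < k}"
  by auto

lemma norm_of_nat_powr: "cmod (of_nat m powr s) = real m powr Re s"
  by (subst norm_powr_real_powr) auto

lemma norm_AV_summand:
  "cmod (1 / (of_nat m powr s1 * of_nat n powr s2)) = real m powr (- Re s1) * real n powr (- Re s2)"
  by (simp add: norm_divide norm_mult norm_inverse norm_of_nat_powr powr_minus divide_inverse)

lemma norm_AV_coeff_le: "cmod (AV_coeff s1 s2 k) \<le> AV_majorant (Re s1) (Re s2) k"
  unfolding AV_coeff_def AV_majorant_def
  by (rule order.trans[OF norm_sum eq_refl], rule sum.cong[OF refl norm_AV_summand])

lemma AV_majorant_nonneg: "AV_majorant a b k \<ge> 0"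
  unfolding AV_majorant_def by (intro sum_nonneg) auto

lemma AV_majorant_le:
  fixes a b \<gamma> :: real
  assumes "0 \<le> \<gamma>" "1 < b + \<gamma>"
  shows "AV_majorant a b k \<le> 2 powr \<bar>a\<bar> * (\<Sum>j. real j powr (- (b + \<gamma>))) * real k powr (\<gamma> - a)"
proof -
  define Z where "Z = (\<Sum>j. real j powr (- (b + \<gamma>)))"
  have Z_summable: "summable (\<lambda>j. real j powr (- (b + \<gamma>)))"
    using assms by (subst summable_real_powr_iff) auto
  have summand_le: "real m powr (- a) * real (k - m) powr (- b)
      \<le> (2 powr \<bar>a\<bar> * real k powr (- a)) * (real k powr \<gamma> * real (k - m) powr (- (b + \<gamma>)))"
    if "k < 2 * m" "m < k" for m
  proof (intro mult_mono)
    show "real m powr (- a) \<le> 2 powr \<bar>a\<bar> * real k powr (- a)"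
      using that by (intro powr_neg_le_two_powr_abs) auto
    have "real (k - m) powr (- b) = real (k - m) powr \<gamma> * real (k - m) powr (- (b + \<gamma>))"
      by (simp flip: powr_add)
    also have "\<dots> \<le> real k powr \<gamma> * real (k - m) powr (- (b + \<gamma>))"
      using that assms by (intro mult_right_mono powr_mono2) auto
    finally show "real (k - m) powr (- b) \<le> real k powr \<gamma> * real (k - m) powr (- (b + \<gamma>))" .
  qed auto
  have "(\<Sum>m | k < 2 * m \<and> m < k. real (k - m) powr (- (b + \<gamma>))) \<le> Z"
  proof -
    have "(\<Sum>m | k < 2 * m \<and> m < k. real (k - m) powr (- (b + \<gamma>)))
        = (\<Sum>j\<in>(\<lambda>m. k - m) ` {m. k < 2 * m \<and> m < k}. real j powr (- (b + \<gamma>)))"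
      by (subst sum.reindex) (auto simp: inj_on_def)
    also have "\<dots> \<le> Z"
      unfolding Z_def by (intro sum_le_suminf Z_summable finite_imageI finite_AV_range) auto
    finally show ?thesis .
  qed
  note tail = this
  have "AV_majorant a b k \<le> (\<Sum>m | k < 2 * m \<and> m < k.
          (2 powr \<bar>a\<bar> * real k powr (- a)) * (real k powr \<gamma> * real (k - m) powr (- (b + \<gamma>))))"
    unfolding AV_majorant_def by (rule sum_mono, rule summand_le) auto
  also have "\<dots> = (2 powr \<bar>a\<bar> * real k powr (- a) * real k powr \<gamma>) *
          (\<Sum>m | k < 2 * m \<and> m < k. real (k - m) powr (- (b + \<gamma>)))"
    by (simp only: sum_distrib_left mult.assoc)
  also have "\<dots> \<le> (2 powr \<bar>a\<bar> * real k powr (- a) * real k powr \<gamma>) * Z"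
    by (intro mult_left_mono tail) auto
  also have "\<dots> = 2 powr \<bar>a\<bar> * Z * real k powr (\<gamma> - a)"
    by (simp add: powr_diff powr_minus divide_inverse mult_ac)
  finally show ?thesis by (simp add: Z_def)
qed

lemma AV_majorant_decay:
  fixes a b \<sigma> :: real
  assumes "1 < a + \<sigma>" "2 < a + b + \<sigma>"
  obtains C \<delta> where "0 < \<delta>" "\<And>k. AV_majorant a b k * real k powr (- \<sigma>) \<le> C * real k powr (-1-\<delta>)"
proof -
  define \<gamma> where "\<gamma> = (max 0 (1 - b) + (a + \<sigma> - 1)) / 2"
  have \<gamma>: "0 \<le> \<gamma>" "1 < b + \<gamma>" "\<gamma> < a + \<sigma> - 1"
    using assms by (auto simp: \<gamma>_def max_def field_simps)
  define C where "C = 2 powr \<bar>a\<bar> * (\<Sum>j. real j powr (- (b + \<gamma>)))"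
  show ?thesis
  proof
    show "0 < a + \<sigma> - 1 - \<gamma>" using \<gamma> by simp
    fix k
    have "AV_majorant a b k * real k powr (- \<sigma>) \<le> C * real k powr (\<gamma> - a) * real k powr (- \<sigma>)"
      unfolding C_def by (intro mult_right_mono AV_majorant_le \<gamma>) auto
    also have "\<dots> = C * real k powr ((\<gamma> - a) + - \<sigma>)"
      by (simp only: mult.assoc powr_add)
    also have "(\<gamma> - a) + - \<sigma> = -1 - (a + \<sigma> - 1 - \<gamma>)"
      by simp
    finally show "AV_majorant a b k * real k powr (- \<sigma>) \<le> C * real k powr (-1 - (a + \<sigma> - 1 - \<gamma>))" .
  qed
qed

lemma bij_betw_AV_pairs:
  "bij_betw (\<lambda>(k, m). (m, k - m)) (SIGMA k:UNIV. {m::nat. k < 2 * m \<and> m < k}) {(m, n). 0 < n \<and> n < m}"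
  by (rule bij_betw_byWitness[where f' = "\<lambda>(m, n). (m + n, m)"]) auto

lemma zeta_AV2_sums:
  assumes "1 < Re s1 + Re s" "2 < Re s1 + Re s2 + Re s"
  shows "(\<lambda>k. AV_coeff s1 s2 k / of_nat k powr s) sums zeta_AV2 s1 s2 s"
proof -
  obtain C \<delta> where "0 < \<delta>" and
    decay: "\<And>k. AV_majorant (Re s1) (Re s2) k * real k powr (- Re s) \<le> C * real k powr (-1-\<delta>)"
    using AV_majorant_decay[OF assms] by blast
  define g where "g k = AV_majorant (Re s1) (Re s2) k * real k powr (- Re s)" for k
  define SG where "SG = (SIGMA k:UNIV. {m::nat. k < 2 * m \<and> m < k})"
  define f where "f = (\<lambda>(k, m). 1 / (of_nat m powr s1 * of_nat (k - m) powr s2) / of_nat k powr s)"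
  have "summable g"
  proof (rule summable_comparison_test')
    show "summable (\<lambda>k. C * real k powr (-1-\<delta>))"
      using \<open>0 < \<delta>\<close> by (intro summable_mult) (simp add: summable_real_powr_iff)
    show "norm (g k) \<le> C * real k powr (-1-\<delta>)" for k
      using decay[of k] AV_majorant_nonneg by (simp add: g_def)
  qed
  then have "g summable_on UNIV"
    by (simp add: g_def AV_majorant_nonneg summable_on_UNIV_nonneg_real_iff)
  moreover have "((\<lambda>m. norm (f (k, m))) has_sum g k) {m. k < 2 * m \<and> m < k}" for k
  proof -
    have "norm (f (k, m)) = real m powr (- Re s1) * real (k - m) powr (- Re s2) * real k powr (- Re s)" for m
      by (simp add: f_def norm_divide norm_mult norm_inverse norm_of_nat_powr powr_minus divide_inverse)
    then show ?thesis
      using finite_AV_range by (simp only: has_sum_finiteI g_def AV_majorant_def sum_distrib_right)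
  qed
  ultimately have "(\<lambda>x. norm (f x)) summable_on SG"
    unfolding SG_def by (intro summable_on_SigmaI) auto
  then have "(f has_sum infsum f SG) SG"
    by (rule has_sum_infsum[OF abs_summable_summable])
  moreover have "((\<lambda>m. f (k, m)) has_sum AV_coeff s1 s2 k / of_nat k powr s) {m. k < 2 * m \<and> m < k}" for k
    using finite_AV_range by (auto intro!: has_sum_finiteI simp: f_def AV_coeff_def sum_divide_distrib)
  ultimately have "((\<lambda>k. AV_coeff s1 s2 k / of_nat k powr s) has_sum infsum f SG) UNIV"
    unfolding SG_def by (rule has_sum_SigmaD)
  moreover have "infsum f SG = zeta_AV2 s1 s2 s"
    unfolding zeta_AV2_def SG_def f_def
    by (subst infsum_reindex_bij_betw[OF bij_betw_AV_pairs, symmetric])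
       (auto intro!: infsum_cong simp: divide_simps)
  ultimately show ?thesis
    by (simp add: has_sum_imp_sums)
qed

lemma zeta_AV2_sq_eq:
  assumes "summable (\<lambda>k. (cmod (AV_coeff s1 s2 k) * real k powr (- \<sigma>))^2)"
  shows "zeta_AV2_sq s1 s2 (of_real (2 * \<sigma>)) = of_real (\<Sum>k. (cmod (AV_coeff s1 s2 k) * real k powr (- \<sigma>))^2)"
proof -
  define g where "g = (\<lambda>k. (cmod (AV_coeff s1 s2 k) * real k powr (- \<sigma>))^2)"
  have term_eq: "of_real ((cmod (AV_coeff s1 s2 k))^2) / of_nat k powr of_real (2 * \<sigma>) = complex_of_real (g k)" for k
  proof (cases "k = 0")
    case False
    have "(real k powr (- \<sigma>))^2 = real k powr (- \<sigma> + - \<sigma>)"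
      unfolding power2_eq_square by (rule powr_add[symmetric])
    also have "\<dots> = inverse (real k powr (2 * \<sigma>))"
      by (simp add: powr_minus[symmetric])
    finally have "g k = (cmod (AV_coeff s1 s2 k))^2 / real k powr (2 * \<sigma>)"
      by (simp add: g_def power_mult_distrib divide_inverse)
    then show ?thesis
      using powr_of_real[of "real k" "2 * \<sigma>"] by simp
  qed (simp add: g_def)
  have "g 0 = 0" "g 1 = 0"
    by (simp_all add: g_def AV_coeff_def)
  then have "zeta_AV2_sq s1 s2 (of_real (2 * \<sigma>)) = infsum (\<lambda>k. complex_of_real (g k)) UNIV"
    unfolding zeta_AV2_sq_def AV_range_eq AV_coeff_def[symmetric] term_eq
    by (intro infsum_cong_neutral) (auto simp: not_le less_2_cases_iff)
  also have "\<dots> = of_real (suminf g)"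
  proof (rule infsumI, rule norm_summable_imp_has_sum)
    show "summable (\<lambda>k. norm (complex_of_real (g k)))"
      using assms by (simp only: norm_of_real g_def abs_power2)
    show "(\<lambda>k. complex_of_real (g k)) sums complex_of_real (suminf g)"
      unfolding sums_of_real_iff using assms by (simp add: g_def summable_sums)
  qed
  finally show ?thesis by (simp add: g_def)
qed

lemma of_nat_powr_Complex:
  assumes "0 < k"
  shows "of_nat k powr Complex \<sigma> t = of_real (real k powr \<sigma>) * exp (\<i> * of_real (ln (real k) * t))"
proof -
  have "of_nat k powr Complex \<sigma> t = exp (of_real (\<sigma> * ln (real k)) + \<i> * of_real (ln (real k) * t))"
    using assms by (simp add: powr_def Ln_of_nat Complex_eq algebra_simps)
  also have "\<dots> = of_real (real k powr \<sigma>) * exp (\<i> * of_real (ln (real k) * t))"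
    using assms by (simp only: exp_add exp_of_real powr_def) simp
  finally show ?thesis .
qed

lemma zeta_AV2_Complex_eq:
  assumes "1 < Re s1 + \<sigma>" "2 < Re s1 + Re s2 + \<sigma>"
  shows "zeta_AV2 s1 s2 (Complex \<sigma> t) =
           (\<Sum>k. AV_coeff s1 s2 k * of_real (real k powr (- \<sigma>)) * exp (\<i> * of_real (- ln (real k) * t)))"
proof -
  have "AV_coeff s1 s2 k / of_nat k powr Complex \<sigma> t
      = AV_coeff s1 s2 k * of_real (real k powr (- \<sigma>)) * exp (\<i> * of_real (- ln (real k) * t))" for k
    by (cases "k = 0") (simp_all add: of_nat_powr_Complex powr_minus exp_minus divide_inverse)
  then show ?thesis
    using zeta_AV2_sums[of s1 "Complex \<sigma> t" s2] assms by (simp add: sums_iff)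
qed

lemma bigo_one_of_mean_bound:
  fixes \<Phi> :: "real \<Rightarrow> real" and S M :: real
  assumes "\<And>T. 2 \<le> T \<Longrightarrow> \<bar>\<Phi> T - (T - 2) * S\<bar> \<le> M"
  shows "(\<lambda>T. complex_of_real (\<Phi> T) - complex_of_real S * complex_of_real T) \<in> O[at_top](\<lambda>_. 1)"
proof (rule bigoI)
  show "eventually (\<lambda>T. norm (complex_of_real (\<Phi> T) - complex_of_real S * complex_of_real T)
          \<le> (M + 2 * \<bar>S\<bar>) * norm (1::complex)) at_top"
    using eventually_ge_at_top[of "2::real"]
  proof eventually_elim
    case (elim T)
    with assms have "\<bar>\<Phi> T - S * T\<bar> \<le> M + 2 * \<bar>S\<bar>"
      by (fastforce simp: abs_le_iff algebra_simps)
    then show ?case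
      by (simp flip: of_real_mult of_real_diff)
  qed
qed

theorem theorem1p1:
  fixes s1 s2 :: complex and \<sigma>3 :: real
  assumes "Re s1 + \<sigma>3 > 1" and "Re s1 + Re s2 + \<sigma>3 > 2"
  shows "(\<lambda>T::real. complex_of_real
             (integral {2..T} (\<lambda>t3. (cmod (zeta_AV2 s1 s2 (Complex \<sigma>3 t3)))^2))
           - zeta_AV2_sq s1 s2 (complex_of_real (2 * \<sigma>3)) * complex_of_real T)
         \<in> O[at_top](\<lambda>_. 1)"
proof -
  obtain C \<delta> where "0 < \<delta>" and
    decay: "\<And>k. AV_majorant (Re s1) (Re s2) k * real k powr (- \<sigma>3) \<le> C * real k powr (-1-\<delta>)"
    using AV_majorant_decay[of "Re s1" \<sigma>3 "Re s2"] assms by blast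
  define c where "c k = AV_coeff s1 s2 k * of_real (real k powr (- \<sigma>3))" for k
  have c_le: "cmod (c k) \<le> C * real k powr (-1-\<delta>)" for k
    using order.trans[OF mult_right_mono[OF norm_AV_coeff_le] decay] by (simp add: c_def norm_mult)
  have sq_eq: "zeta_AV2_sq s1 s2 (of_real (2 * \<sigma>3)) = of_real (\<Sum>k. (cmod (c k))^2)"
    using zeta_AV2_sq_eq summable_norm_power2_of_powr_bound[OF \<open>0 < \<delta>\<close> c_le]
    by (simp add: c_def norm_mult)
  show ?thesis
    unfolding zeta_AV2_Complex_eq[OF assms, folded c_def] sq_eq
    by (rule bigo_one_of_mean_bound) (rule dirichlet_series_mean_square_le[OF \<open>0 < \<delta>\<close> _ c_le])
qed

end
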